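(* Let $M$ be a multigraph with $n$ vertices. Then $M$ is the double competition multigraph of a reflexive digraph if and only if there exist an ordering $(v_1,\ldots,v_n)$ of the vertices of $M$ and a double indexed edge clique partition $\{S_{ij}\mid i,j\in[n]\}$ of $M$ such that the following conditions hold: (I) for any $i,j\in[n]$, if $|A_i\cap B_j|\ge 2$, then $A_i\cap B_j=S_{ij}$; (III) for any $i\in[n]$, $v_i\in S_{i*}\cup S_{*i}$, where $A_i = S_{i*}\cup T^+_i$, $S_{i*} := \bigcup_{p\in[n]} S_{ip}$, $T^+_i := \{v_b \mid a,b\in[n],\ v_i\in S_{ab}\}$, and $B_j = S_{*j}\cup T^-_j$, $S_{*j} := \bigcup_{q\in[n]} S_{qj}$, $T^-_j := \{v_a \mid a,b\in[n],\ v_j\in S_{ab}\}$.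
   Context: A digraph $D$ is a pair $(V(D),A(D))$ with $A(D)$ a set of ordered pairs of vertices (arcs); an arc $(v,v)$ is a loop, and $D$ is reflexive if $(v,v)\in A(D)$ for every $v\in V(D)$. $N^+_D(x)=\{v\mid (x,v)\in A(D)\}$ and $N^-_D(x)=\{v\mid (v,x)\in A(D)\}$. A multigraph $M$ (without loops) is a vertex set $V(M)$ together with a function $m_M$ assigning to each unordered pair $\{x,y\}$ of distinct vertices a nonnegative integer, the number of edges between $x$ and $y$. The double competition multigraph of a digraph $D$ is the multigraph $M$ with $V(M)=V(D)$ and $m_M(\{x,y\}) = |N^+_D(x)\cap N^+_D(y)|\cdot|N^-_D(x)\cap N^-_D(y)|$ for distinct $x,y$. A clique of $M$ is a set of vertices that are pairwise adjacent (i.e. $m_M\ge 1$ on every pair of distinct elements); the empty set and singletons count as cliques. An edge clique partition of $M$ is a family (multiset) $\mathcal{F}$ of cliques of $M$ such that any two distinct vertices $x,y$ are contained in exactly $m_M(\{x,y\})$ members of $\mathcal{F}$; a double indexed edge clique partition $\{S_{ij}\mid i,j\in[n]\}$ is such a family indexed by pairs $(i,j)\in[n]\times[n]$ (members may be empty). $[n]=\{1,\ldots,n\}$. *)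

theory Defs
  imports Main
begin

(* A multigraph on vertex set V is given by V together with a multiplicity
   function m on unordered pairs: m {x,y} for distinct x, y in V. *)

definition out_nbr :: "('a \<times> 'a) set \<Rightarrow> 'a \<Rightarrow> 'a set" where
  "out_nbr A x = {v. (x, v) \<in> A}"

definition in_nbr :: "('a \<times> 'a) set \<Rightarrow> 'a \<Rightarrow> 'a set" where
  "in_nbr A x = {v. (v, x) \<in> A}"

definition is_digraph_on :: "'a set \<Rightarrow> ('a \<times> 'a) set \<Rightarrow> bool" where
  "is_digraph_on V A \<longleftrightarrow> A \<subseteq> V \<times> V"

definition reflexive_digraph :: "'a set \<Rightarrow> ('a \<times> 'a) set \<Rightarrow> bool" where
  "reflexive_digraph V A \<longleftrightarrow> (\<forall>v\<in>V. (v, v) \<in> A)"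

definition is_double_competition_multigraph ::
  "'a set \<Rightarrow> ('a set \<Rightarrow> nat) \<Rightarrow> ('a \<times> 'a) set \<Rightarrow> bool" where
  "is_double_competition_multigraph V m A \<longleftrightarrow>
     (\<forall>x\<in>V. \<forall>y\<in>V. x \<noteq> y \<longrightarrow>
        m {x, y} = card (out_nbr A x \<inter> out_nbr A y) * card (in_nbr A x \<inter> in_nbr A y))"

definition is_clique :: "'a set \<Rightarrow> ('a set \<Rightarrow> nat) \<Rightarrow> 'a set \<Rightarrow> bool" where
  "is_clique V m Q \<longleftrightarrow> Q \<subseteq> V \<and> (\<forall>x\<in>Q. \<forall>y\<in>Q. x \<noteq> y \<longrightarrow> m {x, y} \<ge> 1)"

(* {S i j | i, j \<in> [n]} is a double indexed edge clique partition of (V, m):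
   members counted with multiplicity via their indices *)
definition double_indexed_ecp ::
  "'a set \<Rightarrow> ('a set \<Rightarrow> nat) \<Rightarrow> nat \<Rightarrow> (nat \<Rightarrow> nat \<Rightarrow> 'a set) \<Rightarrow> bool" where
  "double_indexed_ecp V m n S \<longleftrightarrow>
     (\<forall>i\<in>{1..n}. \<forall>j\<in>{1..n}. is_clique V m (S i j)) \<and>
     (\<forall>x\<in>V. \<forall>y\<in>V. x \<noteq> y \<longrightarrow>
        card {(i, j). i \<in> {1..n} \<and> j \<in> {1..n} \<and> x \<in> S i j \<and> y \<in> S i j} = m {x, y})"

definition S_row :: "nat \<Rightarrow> (nat \<Rightarrow> nat \<Rightarrow> 'a set) \<Rightarrow> nat \<Rightarrow> 'a set" where
  "S_row n S i = (\<Union>p\<in>{1..n}. S i p)"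

definition S_col :: "nat \<Rightarrow> (nat \<Rightarrow> nat \<Rightarrow> 'a set) \<Rightarrow> nat \<Rightarrow> 'a set" where
  "S_col n S j = (\<Union>q\<in>{1..n}. S q j)"

definition T_plus :: "nat \<Rightarrow> (nat \<Rightarrow> 'a) \<Rightarrow> (nat \<Rightarrow> nat \<Rightarrow> 'a set) \<Rightarrow> nat \<Rightarrow> 'a set" where
  "T_plus n v S i = {v b | a b. a \<in> {1..n} \<and> b \<in> {1..n} \<and> v i \<in> S a b}"

definition T_minus :: "nat \<Rightarrow> (nat \<Rightarrow> 'a) \<Rightarrow> (nat \<Rightarrow> nat \<Rightarrow> 'a set) \<Rightarrow> nat \<Rightarrow> 'a set" where
  "T_minus n v S j = {v a | a b. a \<in> {1..n} \<and> b \<in> {1..n} \<and> v j \<in> S a b}"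

definition A_set :: "nat \<Rightarrow> (nat \<Rightarrow> 'a) \<Rightarrow> (nat \<Rightarrow> nat \<Rightarrow> 'a set) \<Rightarrow> nat \<Rightarrow> 'a set" where
  "A_set n v S i = S_row n S i \<union> T_plus n v S i"

definition B_set :: "nat \<Rightarrow> (nat \<Rightarrow> 'a) \<Rightarrow> (nat \<Rightarrow> nat \<Rightarrow> 'a set) \<Rightarrow> nat \<Rightarrow> 'a set" where
  "B_set n v S j = S_col n S j \<union> T_minus n v S j"

end

theory Submission
  imports Defs
begin

text \<open>For a digraph \<open>D\<close>, the cells
  \<open>C\<^sub>i\<^sub>j = N\<^sup>-(v\<^sub>i) \<inter> N\<^sup>+(v\<^sub>j)\<close> form a double indexed edge clique partition of its double
  competition multigraph: a pair \<open>x, y\<close> lies in \<open>C\<^sub>i\<^sub>j\<close> exactly when \<open>v\<^sub>i\<close> is a common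
  out-neighbour and \<open>v\<^sub>j\<close> a common in-neighbour, so it lies in
  \<open>|N\<^sup>+(x) \<inter> N\<^sup>+(y)| \<cdot> |N\<^sup>-(x) \<inter> N\<^sup>-(y)|\<close> cells. If \<open>D\<close> is reflexive, then \<open>A\<^sub>i = N\<^sup>-(v\<^sub>i)\<close>
  and \<open>B\<^sub>j = N\<^sup>+(v\<^sub>j)\<close>, whence \<open>A\<^sub>i \<inter> B\<^sub>j = C\<^sub>i\<^sub>j\<close> and \<open>v\<^sub>i \<in> C\<^sub>i\<^sub>i\<close>.
  Conversely, given a partition \<open>S\<close> with (I) and (III), take the arcs \<open>x \<rightarrow> v\<^sub>i\<close> for
  \<open>x \<in> A\<^sub>i\<close>. Since \<open>v\<^sub>k \<in> A\<^sub>i \<longleftrightarrow> v\<^sub>i \<in> B\<^sub>k\<close>, this digraph has \<open>N\<^sup>-(v\<^sub>i) = A\<^sub>i\<close> and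
  \<open>N\<^sup>+(v\<^sub>j) = B\<^sub>j\<close>; it is reflexive by (III), and by (I) its cells contain the same
  pairs of distinct vertices as the \<open>S\<^sub>i\<^sub>j\<close>, so the count above yields \<open>m\<close>.\<close>

lemma card_pairs_bij_betw:
  assumes v: "bij_betw v I V" and "X \<subseteq> V" and "Y \<subseteq> V"
  shows "card {(i, j). i \<in> I \<and> j \<in> I \<and> v i \<in> X \<and> v j \<in> Y} = card X * card Y"
proof -
  have card_preimage: "card {i \<in> I. v i \<in> Z} = card Z" if "Z \<subseteq> V" for Z
  proof (rule bij_betw_same_card, rule bij_betw_subset[OF v])
    show "v ` {i \<in> I. v i \<in> Z} = Z" using that bij_betw_imp_surj_on[OF v] by auto
  qed auto
  have "{(i, j). i \<in> I \<and> j \<in> I \<and> v i \<in> X \<and> v j \<in> Y} = {i \<in> I. v i \<in> X} \<times> {j \<in> I. v j \<in> Y}"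
    by auto
  then show ?thesis
    using card_preimage assms(2,3) by (simp add: card_cartesian_product)
qed

lemma card_common_cells:
  assumes "is_digraph_on V A" and "bij_betw v I V"
  shows "card {(i, j). i \<in> I \<and> j \<in> I \<and>
                x \<in> in_nbr A (v i) \<inter> out_nbr A (v j) \<and> y \<in> in_nbr A (v i) \<inter> out_nbr A (v j)}
    = card (out_nbr A x \<inter> out_nbr A y) * card (in_nbr A x \<inter> in_nbr A y)"
proof -
  have "{(i, j). i \<in> I \<and> j \<in> I \<and>
                x \<in> in_nbr A (v i) \<inter> out_nbr A (v j) \<and> y \<in> in_nbr A (v i) \<inter> out_nbr A (v j)}
      = {(i, j). i \<in> I \<and> j \<in> I \<and>
                v i \<in> out_nbr A x \<inter> out_nbr A y \<and> v j \<in> in_nbr A x \<inter> in_nbr A y}"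
    by (auto simp: in_nbr_def out_nbr_def)
  also have "card \<dots> = card (out_nbr A x \<inter> out_nbr A y) * card (in_nbr A x \<inter> in_nbr A y)"
    using assms by (intro card_pairs_bij_betw) (auto simp: is_digraph_on_def in_nbr_def out_nbr_def)
  finally show ?thesis .
qed

lemma cell_is_clique:
  assumes "finite V" and "is_digraph_on V A" and "is_double_competition_multigraph V m A"
  shows "is_clique V m (in_nbr A a \<inter> out_nbr A b)"
  unfolding is_clique_def
proof (intro conjI ballI impI)
  show "in_nbr A a \<inter> out_nbr A b \<subseteq> V"
    using assms(2) by (auto simp: is_digraph_on_def in_nbr_def)
next
  fix x y assume x: "x \<in> in_nbr A a \<inter> out_nbr A b" and y: "y \<in> in_nbr A a \<inter> out_nbr A b"
    and "x \<noteq> y"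
  have nbrs_finite: "finite (out_nbr A z)" "finite (in_nbr A z)" for z
    using assms(1,2) by (auto simp: is_digraph_on_def in_nbr_def out_nbr_def intro: finite_subset)
  have "a \<in> out_nbr A x \<inter> out_nbr A y" and "b \<in> in_nbr A x \<inter> in_nbr A y"
    using x y by (auto simp: in_nbr_def out_nbr_def)
  then have "card (out_nbr A x \<inter> out_nbr A y) > 0" and "card (in_nbr A x \<inter> in_nbr A y) > 0"
    using nbrs_finite by (auto simp: card_gt_0_iff)
  moreover have "x \<in> V" and "y \<in> V"
    using x y assms(2) by (auto simp: is_digraph_on_def in_nbr_def)
  ultimately show "1 \<le> m {x, y}"
    using assms(3) \<open>x \<noteq> y\<close> by (simp add: is_double_competition_multigraph_def)
qed

lemma
  assumes "reflexive_digraph V A" and "is_digraph_on V A" and "bij_betw v {1..n} V"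
    and "S = (\<lambda>i j. in_nbr A (v i) \<inter> out_nbr A (v j))" and "i \<in> {1..n}"
  shows A_set_reflexive: "A_set n v S i = in_nbr A (v i)"
    and B_set_reflexive: "B_set n v S i = out_nbr A (v i)"
proof -
  have onto: "\<exists>k\<in>{1..n}. v k = x" if "x \<in> V" for x
    using that bij_betw_imp_surj_on[OF assms(3)] by auto
  have loop: "(x, x) \<in> A" if "x \<in> V" for x
    using assms(1) that by (simp add: reflexive_digraph_def)
  have "in_nbr A (v i) \<subseteq> S_row n S i"
  proof
    fix x assume x: "x \<in> in_nbr A (v i)"
    then have "x \<in> V"
      using assms(2) by (auto simp: is_digraph_on_def in_nbr_def)
    then obtain k where k: "k \<in> {1..n}" "v k = x"
      using onto by blast
    then have "x \<in> S i k"
      using x loop \<open>x \<in> V\<close> assms(4) by (simp add: out_nbr_def)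
    then show "x \<in> S_row n S i"
      using k by (auto simp: S_row_def)
  qed
  then show "A_set n v S i = in_nbr A (v i)"
    using assms(4) by (auto simp: A_set_def S_row_def T_plus_def in_nbr_def out_nbr_def)
  have "out_nbr A (v i) \<subseteq> S_col n S i"
  proof
    fix x assume x: "x \<in> out_nbr A (v i)"
    then have "x \<in> V"
      using assms(2) by (auto simp: is_digraph_on_def out_nbr_def)
    then obtain k where k: "k \<in> {1..n}" "v k = x"
      using onto by blast
    then have "x \<in> S k i"
      using x loop \<open>x \<in> V\<close> assms(4) by (simp add: in_nbr_def)
    then show "x \<in> S_col n S i"
      using k by (auto simp: S_col_def)
  qed
  then show "B_set n v S i = out_nbr A (v i)"
    using assms(4) by (auto simp: B_set_def S_col_def T_minus_def in_nbr_def out_nbr_def)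
qed

lemma double_competition_multigraph_partition:
  assumes "finite V" and "card V = n" and "is_digraph_on V A" and "reflexive_digraph V A"
    and "is_double_competition_multigraph V m A"
  shows "\<exists>v S. bij_betw v {1..n} V \<and> double_indexed_ecp V m n S \<and>
        (\<forall>i\<in>{1..n}. \<forall>j\<in>{1..n}.
            card (A_set n v S i \<inter> B_set n v S j) \<ge> 2 \<longrightarrow>
            A_set n v S i \<inter> B_set n v S j = S i j) \<and>
        (\<forall>i\<in>{1..n}. v i \<in> S_row n S i \<union> S_col n S i)"
proof -
  obtain v where v: "bij_betw v {1..n} V"
    using ex_bij_betw_nat_finite_1[OF assms(1)] assms(2) by auto
  define S where "S = (\<lambda>i j. in_nbr A (v i) \<inter> out_nbr A (v j))"
  have "double_indexed_ecp V m n S"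
    using cell_is_clique[OF assms(1,3,5)] card_common_cells[OF assms(3) v] assms(5)
    by (simp add: double_indexed_ecp_def is_double_competition_multigraph_def S_def)
  moreover have "A_set n v S i \<inter> B_set n v S j = S i j" if "i \<in> {1..n}" "j \<in> {1..n}" for i j
    using A_set_reflexive[OF assms(4,3) v S_def] B_set_reflexive[OF assms(4,3) v S_def] that
    by (simp add: S_def)
  moreover have "v i \<in> S_row n S i" if "i \<in> {1..n}" for i
  proof -
    have "(v i, v i) \<in> A"
      using assms(4) bij_betw_apply[OF v that] by (simp add: reflexive_digraph_def)
    then show ?thesis
      using that by (auto simp: S_row_def S_def in_nbr_def out_nbr_def)
  qed
  ultimately show ?thesis
    using v by blast
qed

lemma
  assumes "\<And>i j. i \<in> {1..n} \<Longrightarrow> j \<in> {1..n} \<Longrightarrow> S i j \<subseteq> V"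
    and "v ` {1..n} \<subseteq> V" and "i \<in> {1..n}"
  shows A_set_subset: "A_set n v S i \<subseteq> V"
    and B_set_subset: "B_set n v S i \<subseteq> V"
  using assms unfolding A_set_def B_set_def S_row_def S_col_def T_plus_def T_minus_def
  by blast+

lemma A_set_B_set_dual:
  assumes "inj_on v {1..n}" and "i \<in> {1..n}" and "k \<in> {1..n}"
  shows "v k \<in> A_set n v S i \<longleftrightarrow> v i \<in> B_set n v S k"
proof -
  have "v k \<in> A_set n v S i \<longleftrightarrow> (\<exists>p\<in>{1..n}. v k \<in> S i p) \<or> (\<exists>a\<in>{1..n}. v i \<in> S a k)"
    unfolding A_set_def S_row_def T_plus_def using inj_on_eq_iff[OF assms(1)] assms(3) by auto
  also have "\<dots> \<longleftrightarrow> v i \<in> B_set n v S k"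
    unfolding B_set_def S_col_def T_minus_def using inj_on_eq_iff[OF assms(1)] assms(2) by auto
  finally show ?thesis .
qed

lemma pair_in_A_set_Int_B_set_iff:
  assumes "finite (A_set n v S i)"
    and "card (A_set n v S i \<inter> B_set n v S j) \<ge> 2 \<longrightarrow> A_set n v S i \<inter> B_set n v S j = S i j"
    and "i \<in> {1..n}" and "j \<in> {1..n}" and "x \<noteq> y"
  shows "x \<in> A_set n v S i \<inter> B_set n v S j \<and> y \<in> A_set n v S i \<inter> B_set n v S j
    \<longleftrightarrow> x \<in> S i j \<and> y \<in> S i j"
proof
  assume xy: "x \<in> A_set n v S i \<inter> B_set n v S j \<and> y \<in> A_set n v S i \<inter> B_set n v S j"
  then have "card {x, y} \<le> card (A_set n v S i \<inter> B_set n v S j)"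
    using assms(1) by (intro card_mono) auto
  then show "x \<in> S i j \<and> y \<in> S i j"
    using xy assms(2,5) by auto
qed (use assms(3,4) in \<open>auto simp: A_set_def B_set_def S_row_def S_col_def\<close>)

lemma partition_double_competition_multigraph:
  assumes fin: "finite V" and v: "bij_betw v {1..n} V" and ecp: "double_indexed_ecp V m n S"
    and I: "\<forall>i\<in>{1..n}. \<forall>j\<in>{1..n}.
            card (A_set n v S i \<inter> B_set n v S j) \<ge> 2 \<longrightarrow>
            A_set n v S i \<inter> B_set n v S j = S i j"
    and III: "\<forall>i\<in>{1..n}. v i \<in> S_row n S i \<union> S_col n S i"
  shows "\<exists>A. is_digraph_on V A \<and> reflexive_digraph V A \<and>
              is_double_competition_multigraph V m A"
proof -
  define A where "A = {(x, v i) | x i. i \<in> {1..n} \<and> x \<in> A_set n v S i}"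
  have inj: "inj_on v {1..n}" and onto: "v ` {1..n} = V"
    using v by (auto simp: bij_betw_def)
  have S_sub: "S i j \<subseteq> V" if "i \<in> {1..n}" "j \<in> {1..n}" for i j
    using ecp that by (auto simp: double_indexed_ecp_def is_clique_def)
  have A_sub: "A_set n v S i \<subseteq> V" and B_sub: "B_set n v S i \<subseteq> V" if "i \<in> {1..n}" for i
    using A_set_subset[OF S_sub] B_set_subset[OF S_sub] onto that by auto
  have digraph: "is_digraph_on V A"
    using A_sub onto unfolding is_digraph_on_def A_def by blast
  have in_nbr_A: "in_nbr A (v i) = A_set n v S i" if "i \<in> {1..n}" for i
    using inj_on_eq_iff[OF inj] that by (auto simp: A_def in_nbr_def)
  have out_nbr_A: "out_nbr A (v j) = B_set n v S j" if j: "j \<in> {1..n}" for j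
  proof -
    have "v j \<in> in_nbr A (v k) \<longleftrightarrow> v k \<in> B_set n v S j" if "k \<in> {1..n}" for k
      using in_nbr_A A_set_B_set_dual[OF inj that j] that by simp
    then show ?thesis
      using onto digraph B_sub[OF j] by (auto simp: is_digraph_on_def in_nbr_def out_nbr_def)
  qed
  have "v i \<in> A_set n v S i" if "i \<in> {1..n}" for i
    using III that by (auto simp: A_set_def S_row_def S_col_def T_plus_def)
  then have "(v i, v i) \<in> A" if "i \<in> {1..n}" for i
    using in_nbr_A[OF that] that by (auto simp: in_nbr_def)
  then have "reflexive_digraph V A"
    using onto by (auto simp: reflexive_digraph_def)
  moreover have "is_double_competition_multigraph V m A"
    unfolding is_double_competition_multigraph_def
  proof (intro ballI impI)
    fix x y assume "x \<in> V" "y \<in> V" "x \<noteq> y"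
    have "x \<in> S i j \<and> y \<in> S i j \<longleftrightarrow>
          x \<in> in_nbr A (v i) \<inter> out_nbr A (v j) \<and> y \<in> in_nbr A (v i) \<inter> out_nbr A (v j)"
      if "i \<in> {1..n}" "j \<in> {1..n}" for i j
    proof -
      have A_fin: "finite (A_set n v S i)"
        using A_sub[OF that(1)] fin by (rule finite_subset)
      have "card (A_set n v S i \<inter> B_set n v S j) \<ge> 2 \<longrightarrow> A_set n v S i \<inter> B_set n v S j = S i j"
        using I that by blast
      from pair_in_A_set_Int_B_set_iff[OF A_fin this that \<open>x \<noteq> y\<close>] show ?thesis
        by (simp add: in_nbr_A[OF that(1)] out_nbr_A[OF that(2)] conj_ac)
    qed
    then have "{(i, j). i \<in> {1..n} \<and> j \<in> {1..n} \<and> x \<in> S i j \<and> y \<in> S i j}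
      = {(i, j). i \<in> {1..n} \<and> j \<in> {1..n} \<and>
          x \<in> in_nbr A (v i) \<inter> out_nbr A (v j) \<and> y \<in> in_nbr A (v i) \<inter> out_nbr A (v j)}"
      by blast
    moreover have "m {x, y} = card {(i, j). i \<in> {1..n} \<and> j \<in> {1..n} \<and> x \<in> S i j \<and> y \<in> S i j}"
      using ecp \<open>x \<in> V\<close> \<open>y \<in> V\<close> \<open>x \<noteq> y\<close> by (simp add: double_indexed_ecp_def)
    ultimately show "m {x, y} = card (out_nbr A x \<inter> out_nbr A y) * card (in_nbr A x \<inter> in_nbr A y)"
      using card_common_cells[OF digraph v] by simp
  qed
  ultimately show ?thesis
    using digraph by blast
qed

theorem theorem3:
  fixes V :: "'a set" and m :: "'a set \<Rightarrow> nat" and n :: nat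
  assumes "finite V" and "card V = n"
  shows "(\<exists>A. is_digraph_on V A \<and> reflexive_digraph V A \<and>
              is_double_competition_multigraph V m A)
     \<longleftrightarrow>
     (\<exists>v S. bij_betw v {1..n} V \<and> double_indexed_ecp V m n S \<and>
        (\<forall>i\<in>{1..n}. \<forall>j\<in>{1..n}.
            card (A_set n v S i \<inter> B_set n v S j) \<ge> 2 \<longrightarrow>
            A_set n v S i \<inter> B_set n v S j = S i j) \<and>
        (\<forall>i\<in>{1..n}. v i \<in> S_row n S i \<union> S_col n S i))"
  using double_competition_multigraph_partition[OF assms]
    partition_double_competition_multigraph[OF assms(1)]
  by (intro iffI) (elim exE conjE; blast)+

end
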